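(* Let $A\overset{i}{\to}U\overset{j}{\to}G$ be an extension of a semilattice of groups $A$ by a group $G$, and let $S$ be an inverse semigroup with epimorphisms $\pi:U\to S$, $\kappa:S\to G$ such that $A\overset{i}{\to}U\overset{\pi}{\to}S$ is an extension of $A$ by $S$ and $j=\kappa\circ\pi$ (so that the fibres $\kappa^{-1}(x)$ are exactly the $\sigma$-classes of $S$). Then for $x\in G$, the $\sigma$-class $\kappa^{-1}(x)$ has a maximum element (with respect to the natural partial order of $S$) if and only if $j^{-1}(x)=u_x\,i(A)$ for some $u_x\in j^{-1}(x)$.
   Context: A semilattice of groups is an inverse semigroup whose idempotents are central. An extension of $A$ by a group $G$ is an inverse semigroup $U$ with a monomorphism $i:A\to U$ and an epimorphism $j:U\to G$ with $i(A)=j^{-1}(1)$. An extension of $A$ by an inverse semigroup $S$ is an inverse semigroup $U$ with a monomorphism $i:A\to U$ and an idempotent-separating epimorphism $\pi:U\to S$ with $i(A)=\pi^{-1}(E(S))$. $\sigma$ is the minimum group congruence on $S$ ($(s,t)\in\sigma$ iff $es=et$ for some $e\in E(S)$). *)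

theory Defs
  imports "HOL-Algebra.Group"
begin

text \<open>Inverse semigroups are represented as HOL-Algebra monoid records whose
  \<open>one\<close> field is ignored: only the carrier and the multiplication matter.\<close>

definition inverse_semigroup :: "'a monoid \<Rightarrow> bool" where
  "inverse_semigroup S \<longleftrightarrow>
     (\<forall>x\<in>carrier S. \<forall>y\<in>carrier S. x \<otimes>\<^bsub>S\<^esub> y \<in> carrier S) \<and>
     (\<forall>x\<in>carrier S. \<forall>y\<in>carrier S. \<forall>z\<in>carrier S.
        (x \<otimes>\<^bsub>S\<^esub> y) \<otimes>\<^bsub>S\<^esub> z = x \<otimes>\<^bsub>S\<^esub> (y \<otimes>\<^bsub>S\<^esub> z)) \<and>
     (\<forall>a\<in>carrier S. \<exists>!b. b \<in> carrier S \<and>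
        a \<otimes>\<^bsub>S\<^esub> b \<otimes>\<^bsub>S\<^esub> a = a \<and> b \<otimes>\<^bsub>S\<^esub> a \<otimes>\<^bsub>S\<^esub> b = b)"

definition idempotents :: "'a monoid \<Rightarrow> 'a set" ("E") where
  "idempotents S = {e \<in> carrier S. e \<otimes>\<^bsub>S\<^esub> e = e}"

definition semilattice_of_groups :: "'a monoid \<Rightarrow> bool" where
  "semilattice_of_groups A \<longleftrightarrow> inverse_semigroup A \<and>
     (\<forall>e\<in>idempotents A. \<forall>a\<in>carrier A. e \<otimes>\<^bsub>A\<^esub> a = a \<otimes>\<^bsub>A\<^esub> e)"

definition sg_hom :: "'a monoid \<Rightarrow> 'b monoid \<Rightarrow> ('a \<Rightarrow> 'b) \<Rightarrow> bool" where
  "sg_hom S T f \<longleftrightarrow> f \<in> carrier S \<rightarrow> carrier T \<and>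
     (\<forall>x\<in>carrier S. \<forall>y\<in>carrier S. f (x \<otimes>\<^bsub>S\<^esub> y) = f x \<otimes>\<^bsub>T\<^esub> f y)"

definition sg_mono :: "'a monoid \<Rightarrow> 'b monoid \<Rightarrow> ('a \<Rightarrow> 'b) \<Rightarrow> bool" where
  "sg_mono S T f \<longleftrightarrow> sg_hom S T f \<and> inj_on f (carrier S)"

definition sg_epi :: "'a monoid \<Rightarrow> 'b monoid \<Rightarrow> ('a \<Rightarrow> 'b) \<Rightarrow> bool" where
  "sg_epi S T f \<longleftrightarrow> sg_hom S T f \<and> f ` carrier S = carrier T"

definition group_extension ::
  "'a monoid \<Rightarrow> 'u monoid \<Rightarrow> 'g monoid \<Rightarrow> ('a \<Rightarrow> 'u) \<Rightarrow> ('u \<Rightarrow> 'g) \<Rightarrow> bool" where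
  "group_extension A U G i j \<longleftrightarrow> inverse_semigroup A \<and> inverse_semigroup U \<and> group G \<and>
     sg_mono A U i \<and> sg_epi U G j \<and>
     i ` carrier A = {u \<in> carrier U. j u = \<one>\<^bsub>G\<^esub>}"

definition is_extension ::
  "'a monoid \<Rightarrow> 'u monoid \<Rightarrow> 's monoid \<Rightarrow> ('a \<Rightarrow> 'u) \<Rightarrow> ('u \<Rightarrow> 's) \<Rightarrow> bool" where
  "is_extension A U S i p \<longleftrightarrow> inverse_semigroup A \<and> inverse_semigroup U \<and> inverse_semigroup S \<and>
     sg_mono A U i \<and> sg_epi U S p \<and>
     (\<forall>e\<in>idempotents U. \<forall>f\<in>idempotents U. p e = p f \<longrightarrow> e = f) \<and>
     i ` carrier A = {u \<in> carrier U. p u \<in> idempotents S}"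

definition nat_le :: "'a monoid \<Rightarrow> 'a \<Rightarrow> 'a \<Rightarrow> bool" where
  "nat_le S s t \<longleftrightarrow> (\<exists>e\<in>idempotents S. s = e \<otimes>\<^bsub>S\<^esub> t)"

definition is_maximum :: "'a monoid \<Rightarrow> 'a set \<Rightarrow> 'a \<Rightarrow> bool" where
  "is_maximum S X m \<longleftrightarrow> m \<in> X \<and> (\<forall>x\<in>X. nat_le S x m)"

end

theory Submission
  imports Defs
begin

(* A maximum m of the class \<kappa>^-1(x) lifts to some u with \<pi> u = m. Every v in j^-1(x) has
   \<pi> v \<le> \<pi> u, and since \<pi> separates idempotents this lifts to v = u (u^-1 v), where u^-1 v
   lies in j^-1(1) = i(A). Conversely, if j^-1(x) = u i(A), every element of the class is
   \<pi> u f with f = \<pi>(i a) idempotent, and m f = (m f m^-1) m lies below m. *)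

definition semigroup_inverse :: "'a monoid \<Rightarrow> 'a \<Rightarrow> 'a" ("sinv\<index> _" [81] 80) where
  "sinv\<^bsub>S\<^esub> x = (THE y. y \<in> carrier S \<and> x \<otimes>\<^bsub>S\<^esub> y \<otimes>\<^bsub>S\<^esub> x = x \<and> y \<otimes>\<^bsub>S\<^esub> x \<otimes>\<^bsub>S\<^esub> y = y)"

locale inv_semigroup =
  fixes S :: "'a monoid" (structure)
  assumes inverse_semigroup: "inverse_semigroup S"
begin

lemma m_closed [intro, simp]: "x \<in> carrier S \<Longrightarrow> y \<in> carrier S \<Longrightarrow> x \<otimes> y \<in> carrier S"
  using inverse_semigroup by (simp add: inverse_semigroup_def)

lemma m_assoc [simp]:
  "x \<in> carrier S \<Longrightarrow> y \<in> carrier S \<Longrightarrow> z \<in> carrier S \<Longrightarrow> (x \<otimes> y) \<otimes> z = x \<otimes> (y \<otimes> z)"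
  using inverse_semigroup by (simp add: inverse_semigroup_def)

lemma unique_inverse:
  "x \<in> carrier S \<Longrightarrow> \<exists>!y. y \<in> carrier S \<and> x \<otimes> y \<otimes> x = x \<and> y \<otimes> x \<otimes> y = y"
  using inverse_semigroup by (simp add: inverse_semigroup_def)

lemma
  assumes x: "x \<in> carrier S"
  shows sinv_closed [intro, simp]: "sinv x \<in> carrier S"
    and mult_sinv_mult [simp]: "x \<otimes> (sinv x \<otimes> x) = x"
    and sinv_mult_sinv [simp]: "sinv x \<otimes> (x \<otimes> sinv x) = sinv x"
proof -
  have "sinv x \<in> carrier S \<and> x \<otimes> sinv x \<otimes> x = x \<and> sinv x \<otimes> x \<otimes> sinv x = sinv x"
    unfolding semigroup_inverse_def by (rule theI'[OF unique_inverse[OF x]])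
  then show "sinv x \<in> carrier S" "x \<otimes> (sinv x \<otimes> x) = x" "sinv x \<otimes> (x \<otimes> sinv x) = sinv x"
    using x by (simp_all flip: m_assoc)
qed

lemma mult_sinv_mult_left [simp]:
  "x \<in> carrier S \<Longrightarrow> y \<in> carrier S \<Longrightarrow> x \<otimes> (sinv x \<otimes> (x \<otimes> y)) = x \<otimes> y"
  using m_assoc[of x "sinv x \<otimes> x" y] by simp

lemma sinv_unique:
  assumes "x \<in> carrier S" "y \<in> carrier S" "x \<otimes> (y \<otimes> x) = x" "y \<otimes> (x \<otimes> y) = y"
  shows "sinv x = y"
proof -
  have "sinv x \<in> carrier S \<and> x \<otimes> sinv x \<otimes> x = x \<and> sinv x \<otimes> x \<otimes> sinv x = sinv x"
    and "y \<in> carrier S \<and> x \<otimes> y \<otimes> x = x \<and> y \<otimes> x \<otimes> y = y"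
    using assms by simp_all
  with unique_inverse[OF assms(1)] show ?thesis by blast
qed

lemma idempotentsI: "e \<in> carrier S \<Longrightarrow> e \<otimes> e = e \<Longrightarrow> e \<in> idempotents S"
  and idempotentsD: "e \<in> idempotents S \<Longrightarrow> e \<in> carrier S" "e \<in> idempotents S \<Longrightarrow> e \<otimes> e = e"
  by (simp_all add: idempotents_def)

lemma idempotent_mult_left [simp]:
  "e \<in> idempotents S \<Longrightarrow> x \<in> carrier S \<Longrightarrow> e \<otimes> (e \<otimes> x) = e \<otimes> x"
  by (simp add: idempotentsD flip: m_assoc)

lemma sinv_idempotent: "e \<in> idempotents S \<Longrightarrow> sinv e = e"
  by (rule sinv_unique) (auto dest: idempotentsD)

lemma
  assumes x: "x \<in> carrier S"
  shows mult_sinv_idempotent: "x \<otimes> sinv x \<in> idempotents S"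
    and sinv_mult_idempotent: "sinv x \<otimes> x \<in> idempotents S"
proof -
  have "(x \<otimes> sinv x) \<otimes> (x \<otimes> sinv x) = (x \<otimes> (sinv x \<otimes> x)) \<otimes> sinv x" using x by simp
  moreover have "(sinv x \<otimes> x) \<otimes> (sinv x \<otimes> x) = (sinv x \<otimes> (x \<otimes> sinv x)) \<otimes> x" using x by simp
  ultimately show "x \<otimes> sinv x \<in> idempotents S" "sinv x \<otimes> x \<in> idempotents S"
    using x by (auto intro!: idempotentsI simp del: m_assoc)
qed

(* The inverse of ef is f (ef)^-1 e; it is therefore idempotent, and so is ef as its inverse. *)
lemma idempotent_mult:
  assumes e: "e \<in> idempotents S" and f: "f \<in> idempotents S"
  shows "e \<otimes> f \<in> idempotents S"
proof -
  have ec: "e \<in> carrier S" and fc: "f \<in> carrier S" using e f by (auto dest: idempotentsD)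
  define x where "x = e \<otimes> f"
  define a where "a = sinv x"
  define b where "b = f \<otimes> (a \<otimes> e)"
  have xc: "x \<in> carrier S" and ac: "a \<in> carrier S" using ec fc by (simp_all add: x_def a_def)
  have b_absorbs: "f \<otimes> ((a \<otimes> (x \<otimes> a)) \<otimes> e) = b" using xc ec fc by (simp add: a_def b_def)
  have "x \<otimes> (b \<otimes> x) = x \<otimes> (a \<otimes> x)" using e f ec fc ac by (simp add: x_def b_def)
  then have "x \<otimes> (b \<otimes> x) = x" using xc by (simp add: a_def)
  moreover have "b \<otimes> (x \<otimes> b) = b" and bb: "b \<otimes> b = b"
    using e f ec fc ac b_absorbs by (simp_all add: x_def b_def)
  ultimately have "a = b" unfolding a_def using xc ec fc ac by (intro sinv_unique) (simp_all add: b_def)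
  then have "a \<in> idempotents S" using ac bb by (simp add: idempotentsI)
  moreover have "sinv a = x"
    using xc ac by (intro sinv_unique) (simp_all add: a_def)
  ultimately show ?thesis using sinv_idempotent x_def by metis
qed

lemma idempotents_commute:
  assumes e: "e \<in> idempotents S" and f: "f \<in> idempotents S"
  shows "e \<otimes> f = f \<otimes> e"
proof -
  have ec: "e \<in> carrier S" and fc: "f \<in> carrier S" using e f by (auto dest: idempotentsD)
  have ef: "e \<otimes> (f \<otimes> (e \<otimes> f)) = e \<otimes> f" and fe: "f \<otimes> (e \<otimes> (f \<otimes> e)) = f \<otimes> e"
    using idempotentsD(2)[OF idempotent_mult[OF e f]] idempotentsD(2)[OF idempotent_mult[OF f e]]
      ec fc by simp_all
  have "sinv (e \<otimes> f) = f \<otimes> e"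
    using ec fc e f ef fe by (intro sinv_unique) simp_all
  then show ?thesis using sinv_idempotent[OF idempotent_mult[OF e f]] by simp
qed

lemma nat_le_mult_idempotent:
  assumes m: "m \<in> carrier S" and f: "f \<in> idempotents S"
  shows "nat_le S (m \<otimes> f) m"
proof -
  have fc: "f \<in> carrier S" using f by (rule idempotentsD)
  define e where "e = m \<otimes> (f \<otimes> sinv m)"
  have em: "e \<otimes> m = m \<otimes> f"
  proof -
    have "e \<otimes> m = m \<otimes> (f \<otimes> (sinv m \<otimes> m))" using m fc by (simp add: e_def)
    also have "\<dots> = m \<otimes> ((sinv m \<otimes> m) \<otimes> f)"
      using idempotents_commute[OF f sinv_mult_idempotent[OF m]] by simp
    finally show ?thesis using m fc by simp
  qed
  have "e \<otimes> e = (e \<otimes> m) \<otimes> (f \<otimes> sinv m)" using m fc by (simp add: e_def)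
  also have "\<dots> = m \<otimes> f \<otimes> (f \<otimes> sinv m)" by (simp only: em)
  also have "\<dots> = e" using m f fc by (simp add: e_def)
  finally have "e \<otimes> e = e" .
  then have "e \<in> idempotents S" using m fc by (intro idempotentsI) (simp_all add: e_def)
  with em show ?thesis unfolding nat_le_def by metis
qed

end

lemma sg_hom_closed: "sg_hom S T f \<Longrightarrow> x \<in> carrier S \<Longrightarrow> f x \<in> carrier T"
  by (auto simp: sg_hom_def)

lemma sg_hom_mult:
  "sg_hom S T f \<Longrightarrow> x \<in> carrier S \<Longrightarrow> y \<in> carrier S \<Longrightarrow> f (x \<otimes>\<^bsub>S\<^esub> y) = f x \<otimes>\<^bsub>T\<^esub> f y"
  by (simp add: sg_hom_def)

lemma sg_hom_sinv:
  assumes S: "inv_semigroup S" and T: "inv_semigroup T" and f: "sg_hom S T f"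
    and x: "x \<in> carrier S"
  shows "f (sinv\<^bsub>S\<^esub> x) = sinv\<^bsub>T\<^esub> (f x)"
proof -
  interpret S: inv_semigroup S by (rule S)
  interpret T: inv_semigroup T by (rule T)
  have "f x \<otimes>\<^bsub>T\<^esub> (f (sinv\<^bsub>S\<^esub> x) \<otimes>\<^bsub>T\<^esub> f x) = f x"
    and "f (sinv\<^bsub>S\<^esub> x) \<otimes>\<^bsub>T\<^esub> (f x \<otimes>\<^bsub>T\<^esub> f (sinv\<^bsub>S\<^esub> x)) = f (sinv\<^bsub>S\<^esub> x)"
    using x by (simp_all flip: sg_hom_mult[OF f])
  then show ?thesis using x by (intro T.sinv_unique[symmetric] sg_hom_closed[OF f]) simp_all
qed

lemma group_inv_semigroup:
  fixes G :: "'a monoid"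
  assumes "group G"
  shows "inv_semigroup G"
proof -
  interpret group G by (rule assms)
  have "y = inv\<^bsub>G\<^esub> x"
    if "x \<in> carrier G" "y \<in> carrier G" "x \<otimes>\<^bsub>G\<^esub> y \<otimes>\<^bsub>G\<^esub> x = x" for x y
    using that by (metis inv_equality l_cancel_one m_closed m_assoc)
  then show ?thesis
    unfolding inv_semigroup_def inverse_semigroup_def by (auto simp: m_assoc) metis
qed

lemma group_sinv_eq_inv:
  fixes G :: "'a monoid"
  assumes "group G" "x \<in> carrier G"
  shows "sinv\<^bsub>G\<^esub> x = inv\<^bsub>G\<^esub> x"
proof -
  interpret group G by (rule assms)
  show ?thesis
    using assms(2) by (auto intro: inv_semigroup.sinv_unique[OF group_inv_semigroup[OF assms(1)]])
qed

lemma sg_hom_group_sinv: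
  assumes "inv_semigroup S" "group G" "sg_hom S G f" "x \<in> carrier S"
  shows "f (sinv\<^bsub>S\<^esub> x) = inv\<^bsub>G\<^esub> f x"
  using sg_hom_sinv[OF assms(1) group_inv_semigroup assms(3,4)] assms
  by (simp add: group_sinv_eq_inv sg_hom_closed)

definition idempotent_separating :: "'a monoid \<Rightarrow> ('a \<Rightarrow> 'b) \<Rightarrow> bool" where
  "idempotent_separating U f \<longleftrightarrow>
     (\<forall>e\<in>idempotents U. \<forall>e'\<in>idempotents U. f e = f e' \<longrightarrow> e = e')"

(* Writing w = u u^-1 v, one gets \<pi> w = \<pi> v, so w w^-1 = v v^-1 by separation,
   and then v = w w^-1 v is absorbed by the idempotent u u^-1. *)
lemma idempotent_separating_lift_nat_le:
  assumes U: "inv_semigroup U" and S: "inv_semigroup S" and \<pi>: "sg_hom U S \<pi>"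
    and sep: "idempotent_separating U \<pi>"
    and u: "u \<in> carrier U" and v: "v \<in> carrier U" and le: "nat_le S (\<pi> v) (\<pi> u)"
  shows "u \<otimes>\<^bsub>U\<^esub> (sinv\<^bsub>U\<^esub> u \<otimes>\<^bsub>U\<^esub> v) = v"
proof -
  interpret U: inv_semigroup U by (rule U)
  interpret S: inv_semigroup S by (rule S)
  note \<pi>_closed = sg_hom_closed[OF \<pi>] and \<pi>_mult = sg_hom_mult[OF \<pi>]
  obtain e where e: "e \<in> idempotents S" and \<pi>v: "\<pi> v = e \<otimes>\<^bsub>S\<^esub> \<pi> u"
    using le by (auto simp: nat_le_def)
  define w where "w = u \<otimes>\<^bsub>U\<^esub> (sinv\<^bsub>U\<^esub> u \<otimes>\<^bsub>U\<^esub> v)"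
  have wc: "w \<in> carrier U" using u v by (simp add: w_def)
  have "\<pi> w = (\<pi> u \<otimes>\<^bsub>S\<^esub> sinv\<^bsub>S\<^esub> \<pi> u) \<otimes>\<^bsub>S\<^esub> e \<otimes>\<^bsub>S\<^esub> \<pi> u"
    using u v e \<pi>v by (simp add: w_def \<pi>_mult \<pi>_closed sg_hom_sinv[OF U S \<pi>] S.idempotentsD)
  also have "\<dots> = e \<otimes>\<^bsub>S\<^esub> (\<pi> u \<otimes>\<^bsub>S\<^esub> sinv\<^bsub>S\<^esub> \<pi> u) \<otimes>\<^bsub>S\<^esub> \<pi> u"
    using u e by (simp only: S.idempotents_commute[OF S.mult_sinv_idempotent] \<pi>_closed)
  also have "\<dots> = e \<otimes>\<^bsub>S\<^esub> \<pi> u"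
    using u e by (simp add: \<pi>_closed S.idempotentsD)
  finally have "\<pi> w = \<pi> v" using \<pi>v by simp
  then have "\<pi> (w \<otimes>\<^bsub>U\<^esub> sinv\<^bsub>U\<^esub> w) = \<pi> (v \<otimes>\<^bsub>U\<^esub> sinv\<^bsub>U\<^esub> v)"
    using v wc by (simp add: \<pi>_mult sg_hom_sinv[OF U S \<pi>])
  then have ww: "w \<otimes>\<^bsub>U\<^esub> sinv\<^bsub>U\<^esub> w = v \<otimes>\<^bsub>U\<^esub> sinv\<^bsub>U\<^esub> v"
    using sep v wc by (auto simp: idempotent_separating_def U.mult_sinv_idempotent)
  have vw: "v = w \<otimes>\<^bsub>U\<^esub> (sinv\<^bsub>U\<^esub> w \<otimes>\<^bsub>U\<^esub> v)"
    using ww v wc by (metis U.m_assoc U.mult_sinv_mult U.sinv_closed)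
  also have "\<dots> = u \<otimes>\<^bsub>U\<^esub> (sinv\<^bsub>U\<^esub> u \<otimes>\<^bsub>U\<^esub> (w \<otimes>\<^bsub>U\<^esub> (sinv\<^bsub>U\<^esub> w \<otimes>\<^bsub>U\<^esub> v)))"
    using u v wc by (simp add: w_def)
  also have "\<dots> = u \<otimes>\<^bsub>U\<^esub> (sinv\<^bsub>U\<^esub> u \<otimes>\<^bsub>U\<^esub> v)" by (simp only: vw[symmetric])
  finally show ?thesis by (rule sym)
qed

lemma coset_of_fibre_maximum:
  assumes U: "inv_semigroup U" and S: "inv_semigroup S" and G: "group G"
    and \<pi>: "sg_hom U S \<pi>" and sep: "idempotent_separating U \<pi>"
    and j: "sg_hom U G j" and ker: "i ` carrier A = {u \<in> carrier U. j u = \<one>\<^bsub>G\<^esub>}"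
    and factor: "\<forall>u\<in>carrier U. j u = \<kappa> (\<pi> u)"
    and u: "u \<in> carrier U" and max: "is_maximum S {s \<in> carrier S. \<kappa> s = x} (\<pi> u)"
  shows "{v \<in> carrier U. j v = x} = {u \<otimes>\<^bsub>U\<^esub> i a | a. a \<in> carrier A}"
proof -
  interpret U: inv_semigroup U by (rule U)
  interpret G: group G by (rule G)
  have x: "j u = x" "x \<in> carrier G"
    using max factor u sg_hom_closed[OF j] by (auto simp: is_maximum_def)
  show ?thesis
  proof (intro equalityI subsetI)
    fix v assume "v \<in> {v \<in> carrier U. j v = x}"
    then have v: "v \<in> carrier U" "j v = x" by auto
    then have "nat_le S (\<pi> v) (\<pi> u)"
      using max factor sg_hom_closed[OF \<pi>] by (auto simp: is_maximum_def)
    then have "v = u \<otimes>\<^bsub>U\<^esub> (sinv\<^bsub>U\<^esub> u \<otimes>\<^bsub>U\<^esub> v)"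
      using idempotent_separating_lift_nat_le[OF U S \<pi> sep u v(1)] by simp
    moreover have "j (sinv\<^bsub>U\<^esub> u \<otimes>\<^bsub>U\<^esub> v) = \<one>\<^bsub>G\<^esub>"
      using u v x by (simp add: sg_hom_mult[OF j] sg_hom_group_sinv[OF U G j])
    then have "sinv\<^bsub>U\<^esub> u \<otimes>\<^bsub>U\<^esub> v \<in> i ` carrier A" using ker u v by simp
    ultimately show "v \<in> {u \<otimes>\<^bsub>U\<^esub> i a | a. a \<in> carrier A}" by auto
  next
    fix v assume "v \<in> {u \<otimes>\<^bsub>U\<^esub> i a | a. a \<in> carrier A}"
    then obtain a where "a \<in> carrier A" and v: "v = u \<otimes>\<^bsub>U\<^esub> i a" by auto
    then have "i a \<in> carrier U" "j (i a) = \<one>\<^bsub>G\<^esub>" using ker by auto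
    then show "v \<in> {v \<in> carrier U. j v = x}" using u v x by (simp add: sg_hom_mult[OF j])
  qed
qed

lemma fibre_maximum_of_coset:
  assumes S: "inv_semigroup S" and \<pi>: "sg_epi U S \<pi>"
    and idem: "i ` carrier A \<subseteq> {u \<in> carrier U. \<pi> u \<in> idempotents S}"
    and factor: "\<forall>u\<in>carrier U. j u = \<kappa> (\<pi> u)"
    and u: "u \<in> carrier U" "j u = x"
    and coset: "{v \<in> carrier U. j v = x} = {u \<otimes>\<^bsub>U\<^esub> i a | a. a \<in> carrier A}"
  shows "is_maximum S {s \<in> carrier S. \<kappa> s = x} (\<pi> u)"
  unfolding is_maximum_def
proof (intro conjI ballI)
  have \<pi>_hom: "sg_hom U S \<pi>" using \<pi> by (simp add: sg_epi_def)
  show "\<pi> u \<in> {s \<in> carrier S. \<kappa> s = x}" using u factor sg_hom_closed[OF \<pi>_hom] by simp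
  fix s assume "s \<in> {s \<in> carrier S. \<kappa> s = x}"
  moreover have "carrier S = \<pi> ` carrier U" using \<pi> by (simp add: sg_epi_def)
  ultimately obtain v where "v \<in> carrier U" "j v = x" and s: "s = \<pi> v" using factor by auto
  with coset obtain a where a: "a \<in> carrier A" and "v = u \<otimes>\<^bsub>U\<^esub> i a" by auto
  then have "s = \<pi> u \<otimes>\<^bsub>S\<^esub> \<pi> (i a)" and "\<pi> (i a) \<in> idempotents S"
    using s u idem by (auto simp: sg_hom_mult[OF \<pi>_hom])
  then show "nat_le S s (\<pi> u)"
    using inv_semigroup.nat_le_mult_idempotent[OF S] u sg_hom_closed[OF \<pi>_hom] by simp
qed

theorem proposition4p8:
  fixes A :: "'a monoid" and U :: "'u monoid" and G :: "'g monoid" and S :: "'s monoid"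
    and i :: "'a \<Rightarrow> 'u" and j :: "'u \<Rightarrow> 'g" and \<pi> :: "'u \<Rightarrow> 's" and \<kappa> :: "'s \<Rightarrow> 'g"
  assumes "semilattice_of_groups A"
    and "group_extension A U G i j"
    and "inverse_semigroup S"
    and "sg_epi U S \<pi>" and "sg_epi S G \<kappa>"
    and "is_extension A U S i \<pi>"
    and "\<forall>u\<in>carrier U. j u = \<kappa> (\<pi> u)"
    and "x \<in> carrier G"
  shows "(\<exists>m. is_maximum S {s \<in> carrier S. \<kappa> s = x} m) \<longleftrightarrow>
         (\<exists>u. u \<in> carrier U \<and> j u = x \<and>
              {v \<in> carrier U. j v = x} = {u \<otimes>\<^bsub>U\<^esub> i a | a. a \<in> carrier A})"
proof -
  have S: "inv_semigroup S" using assms(3) by (rule inv_semigroup.intro)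
  from assms(2) have U: "inv_semigroup U" and G: "group G" and j: "sg_hom U G j"
    and ker: "i ` carrier A = {u \<in> carrier U. j u = \<one>\<^bsub>G\<^esub>}"
    by (auto simp: group_extension_def sg_epi_def inv_semigroup_def)
  from assms(6) have sep: "idempotent_separating U \<pi>"
    and idem: "i ` carrier A = {u \<in> carrier U. \<pi> u \<in> idempotents S}"
    by (auto simp: is_extension_def idempotent_separating_def)
  have \<pi>: "sg_hom U S \<pi>" using assms(4) by (simp add: sg_epi_def)
  show ?thesis
  proof
    assume "\<exists>m. is_maximum S {s \<in> carrier S. \<kappa> s = x} m"
    then obtain m where max: "is_maximum S {s \<in> carrier S. \<kappa> s = x} m" ..
    moreover obtain u where u: "u \<in> carrier U" and "m = \<pi> u"
      using max assms(4) by (force simp: is_maximum_def sg_epi_def)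
    ultimately have "j u = x" and "{v \<in> carrier U. j v = x} = {u \<otimes>\<^bsub>U\<^esub> i a | a. a \<in> carrier A}"
      using coset_of_fibre_maximum[OF U S G \<pi> sep j ker assms(7) u] u assms(7)
      by (simp_all add: is_maximum_def)
    with u show "\<exists>u. u \<in> carrier U \<and> j u = x \<and>
                   {v \<in> carrier U. j v = x} = {u \<otimes>\<^bsub>U\<^esub> i a | a. a \<in> carrier A}" by blast
  next
    assume "\<exists>u. u \<in> carrier U \<and> j u = x \<and>
                {v \<in> carrier U. j v = x} = {u \<otimes>\<^bsub>U\<^esub> i a | a. a \<in> carrier A}"
    then obtain u where u: "u \<in> carrier U" "j u = x"
      and coset: "{v \<in> carrier U. j v = x} = {u \<otimes>\<^bsub>U\<^esub> i a | a. a \<in> carrier A}" by blast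
    have "is_maximum S {s \<in> carrier S. \<kappa> s = x} (\<pi> u)"
      using fibre_maximum_of_coset[OF S assms(4) equalityD1[OF idem] assms(7) u coset] .
    then show "\<exists>m. is_maximum S {s \<in> carrier S. \<kappa> s = x} m" ..
  qed
qed

end
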